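(* Let $n$ be the number of worker nodes, let $q\ge n$ be an odd integer, $\theta = 2\pi/q$, and let $1\le k_A\le n$. Let $\mathbf{R}_\theta = \begin{bmatrix}\cos\theta & -\sin\theta\\ \sin\theta & \cos\theta\end{bmatrix}$. Let $\mathbf{G}^{rot}$ be the real $2k_A\times 2n$ matrix whose $(i,j)$-th $2\times 2$ block is $\mathbf{R}_\theta^{ji}$ for $i\in\{0,\dots,k_A-1\}$, $j\in\{0,\dots,n-1\}$. A matrix $\mathbf{A}\in\mathbb{R}^{t\times r}$ is split into $2k_A$ equal block-columns $\mathbf{A}_{\langle\alpha,\beta\rangle}$, $\alpha\in\{0,\dots,k_A-1\}$, $\beta\in\{0,1\}$ (ordered lexicographically), and worker $i$ stores $\hat{\mathbf{A}}_{\langle i,j\rangle}=\sum_{\alpha,\beta}\mathbf{G}^{rot}(2\alpha+\beta,2i+j)\mathbf{A}_{\langle\alpha,\beta\rangle}$ for $j\in\{0,1\}$ together with $\mathbf{x}\in\mathbb{R}^t$, and returns $\hat{\mathbf{A}}_{\langle i,j\rangle}^T\mathbf{x}$, $j=0,1$. Then the scheme has threshold $k_A$: for every set of distinct worker indices $i_0,\dots,i_{k_A-1}\in\{0,\dots,n-1\}$, the $2k_A\times 2k_A$ recovery matrix $\tilde{\mathbf{G}}^{rot}$ formed by the block-columns $i_0,\dots,i_{k_A-1}$ of $\mathbf{G}^{rot}$ (i.e. whose $(a,b)$ block is $\mathbf{R}_\theta^{i_b a}$) is nonsingular, so $\mathbf{A}^T\mathbf{x}$ can be recovered from the results of any $k_A$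 workers. Moreover, the worst-case condition number over all such choices satisfies $\max\kappa(\tilde{\mathbf{G}}^{rot}) \le O(q^{\,q-k_A+c_1})$ with $c_1=5.5$.
   Context: For a square matrix $\mathbf{M}$, $\kappa(\mathbf{M})=\|\mathbf{M}\|\|\mathbf{M}^{-1}\|$ with $\|\cdot\|$ the largest singular value. Recovery: for each coordinate position, the row vector $\mathbf{m}\in\mathbb{R}^{1\times 2k_A}$ of the corresponding entries of $\mathbf{A}_{\langle\alpha,\beta\rangle}^T\mathbf{x}$ and the row vector $\mathbf{c}$ of the corresponding received entries satisfy $\mathbf{m}\tilde{\mathbf{G}}^{rot}=\mathbf{c}$. A scheme has threshold $\tau$ if the master can decode from any $\tau$ completed workers. *)

theory Defs
  imports "Jordan_Normal_Form.Matrix" Complex_Main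
begin

definition vec_norm2 :: "real vec \<Rightarrow> real" where
  "vec_norm2 x = sqrt (\<Sum>i<dim_vec x. (x $ i)^2)"

definition spec_norm :: "real mat \<Rightarrow> real" where
  "spec_norm M = Sup {vec_norm2 (M *\<^sub>v x) | x. x \<in> carrier_vec (dim_col M) \<and> vec_norm2 x = 1}"

definition inv_mat :: "real mat \<Rightarrow> real mat" where
  "inv_mat M = (SOME B. B \<in> carrier_mat (dim_row M) (dim_row M) \<and> inverts_mat M B \<and> inverts_mat B M)"

definition cond_num :: "real mat \<Rightarrow> real" where
  "cond_num M = spec_norm M * spec_norm (inv_mat M)"

definition rot_mat :: "real \<Rightarrow> real mat" where
  "rot_mat \<theta> = mat 2 2 (\<lambda>(r,c). if r = 0 \<and> c = 0 then cos \<theta> else if r = 0 then - sin \<theta>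
                                   else if c = 0 then sin \<theta> else cos \<theta>)"

definition G_rot :: "real \<Rightarrow> nat \<Rightarrow> nat \<Rightarrow> real mat" where
  "G_rot \<theta> kA n = mat (2*kA) (2*n)
     (\<lambda>(r,c). (rot_mat \<theta> ^\<^sub>m ((c div 2) * (r div 2))) $$ (r mod 2, c mod 2))"

definition G_rec :: "real \<Rightarrow> nat \<Rightarrow> nat \<Rightarrow> (nat \<Rightarrow> nat) \<Rightarrow> real mat" where
  "G_rec \<theta> kA n idx = mat (2*kA) (2*kA)
     (\<lambda>(r,c). G_rot \<theta> kA n $$ (r, 2 * idx (c div 2) + c mod 2))"

end

theory Submission
  imports Defs "HOL-Computational_Algebra.Polynomial" "HOL-Analysis.L2_Norm" "Jordan_Normal_Form.Determinant"
begin

(*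
  Identify R^2 with C: the rotation R_theta becomes multiplication by w = exp(2 pi i / q),
  so the recovery matrix is the real form of the complex Vandermonde matrix (x_b ^ a) on the
  distinct nodes x_b = w ^ i_b.  Its inverse is the real form of the coefficient matrix of the
  Lagrange basis polynomials L_b of these nodes, and the spectral norm of a matrix is at most
  sqrt (rows * cols) times its largest entry, so everything reduces to bounding the
  coefficients of the L_b.

  Since deg L_b < q, discrete Fourier inversion bounds each coefficient by the maximum of
  |L_b (w ^ t)| over t < q.  At the nodes L_b is 0 or 1.  For the remaining (spare) roots of
  unity, let Q vanish exactly on them and let h(z) = sum_{j<q} (conj x_b * z) ^ j, which
  vanishes at every q-th root of unity except x_b.  Comparing values at all q-th roots of unity
  gives q L_b Q = Q(x_b) h; differentiating at a spare root u and using |w^s - w^t| >= 2/q for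
  s ~= t yields |L_b u| <= 2 q^(q-k), hence kappa <= 8 k^2 q^(q-k).
*)

section \<open>Chords of the unit circle\<close>

lemma sin_ge_half_self:
  fixes x :: real
  assumes "0 \<le> x" "x \<le> 3/2"
  shows "x / 2 \<le> sin x"
proof -
  have "\<bar>sin x - (\<Sum>m<3. sin_coeff m * x ^ m)\<bar> \<le> inverse (fact 3) * \<bar>x\<bar> ^ 3"
    by (rule Maclaurin_sin_bound)
  moreover have "(\<Sum>m<3. sin_coeff m * x ^ m) = x"
    by (simp add: sin_coeff_def numeral_3_eq_3)
  moreover have "inverse (fact 3) * \<bar>x\<bar> ^ 3 = x * x\<^sup>2 / 6"
    using assms(1) by (simp add: numeral_3_eq_3 power2_eq_square field_simps)
  moreover have "x * x \<le> 3/2 * (3/2)"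
    using assms by (intro mult_mono) auto
  hence "x\<^sup>2 \<le> 3"
    unfolding power2_eq_square by linarith
  hence "x * x\<^sup>2 \<le> x * 3"
    using assms(1) by (rule mult_left_mono)
  ultimately show ?thesis by linarith
qed

lemma sin_pi_frac_ge:
  fixes d q :: nat
  assumes "0 < d" "d < q"
  shows "1 / real q \<le> sin (pi * real d / real q)"
proof (cases "q = 2")
  case True
  with assms have "d = 1" by simp
  with True show ?thesis by simp
next
  case False
  with assms have q3: "3 \<le> real q" by simp
  define e where "e = min d (q - d)"
  have e: "1 \<le> e" "2 * e \<le> q" using assms unfolding e_def by auto
  have "sin (pi * real d / real q) = sin (pi * real e / real q)"
  proof (cases "e = d")
    case False
    hence "pi * real e / real q = pi - pi * real d / real q"
      using assms q3 unfolding e_def by (simp add: min_def of_nat_diff field_simps split: if_splits)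
    thus ?thesis by simp
  qed simp
  moreover have "sin (pi / real q) \<le> sin (pi * real e / real q)"
  proof (rule sin_monotone_2pi_le)
    have "0 \<le> pi / real q" by simp
    thus "- (pi / 2) \<le> pi / real q" using pi_gt_zero by linarith
    show "pi / real q \<le> pi * real e / real q"
      using e by (simp add: divide_right_mono)
    show "pi * real e / real q \<le> pi / 2"
      using e q3 by (simp add: field_simps)
  qed
  moreover have "(pi / real q) / 2 \<le> sin (pi / real q)"
  proof (rule sin_ge_half_self)
    have "pi / real q \<le> 4 / 3" using pi_less_4 q3 by (simp add: field_simps)
    thus "pi / real q \<le> 3 / 2" by simp
  qed simp
  moreover have "1 / real q \<le> (pi / real q) / 2"
    using pi_ge_two q3 by (simp add: field_simps)
  ultimately show ?thesis by linarith
qed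

lemma norm_1_minus_cis: "cmod (1 - cis z) = 2 * \<bar>sin (z / 2)\<bar>"
proof -
  have cos: "cos z = 1 - 2 * (sin (z / 2))\<^sup>2"
    using cos_double_sin[of "z / 2"] by simp
  have sin: "sin z = 2 * sin (z / 2) * cos (z / 2)"
    using sin_double[of "z / 2"] by simp
  have "(1 - cos z)\<^sup>2 + (sin z)\<^sup>2 = 4 * (sin (z / 2))\<^sup>2"
    unfolding cos sin power_mult_distrib cos_squared_eq by (simp add: power2_eq_square algebra_simps)
  also have "\<dots> = (2 * \<bar>sin (z / 2)\<bar>)\<^sup>2"
    by (simp add: power_mult_distrib)
  finally have "sqrt ((1 - cos z)\<^sup>2 + (sin z)\<^sup>2) = 2 * \<bar>sin (z / 2)\<bar>"
    by (simp only: real_sqrt_abs)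
  thus ?thesis by (simp add: cmod_def)
qed

section \<open>Polynomials and the Lagrange basis\<close>

lemma poly_eq_sum_lessThan:
  fixes p :: "'a::comm_semiring_1 poly"
  assumes "degree p < n"
  shows "poly p z = (\<Sum>i<n. coeff p i * z ^ i)"
proof -
  have "poly p z = (\<Sum>i\<le>degree p. coeff p i * z ^ i)"
    by (rule poly_altdef)
  also have "\<dots> = (\<Sum>i<n. coeff p i * z ^ i)"
    using assms by (intro sum.mono_neutral_left) (auto simp: coeff_eq_0)
  finally show ?thesis .
qed

lemma pderiv_sum: "pderiv (sum f A) = (\<Sum>x\<in>A. pderiv (f x))"
  by (induction A rule: infinite_finite_induct) (simp_all add: pderiv_add)

definition lagrange_basis :: "('i \<Rightarrow> 'a::field) \<Rightarrow> 'i set \<Rightarrow> 'i \<Rightarrow> 'a poly" where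
  "lagrange_basis x I i = smult (inverse (\<Prod>j\<in>I - {i}. x i - x j)) (\<Prod>j\<in>I - {i}. [:- x j, 1:])"

lemma poly_lagrange_basis:
  assumes "finite I" "inj_on x I" "i \<in> I" "j \<in> I"
  shows "poly (lagrange_basis x I i) (x j) = (if j = i then 1 else 0)"
proof (cases "j = i")
  case True
  have "(\<Prod>l\<in>I - {i}. x i - x l) \<noteq> 0"
    using assms by (auto simp: prod_zero_iff dest: inj_onD)
  with True show ?thesis by (simp add: lagrange_basis_def poly_prod)
next
  case False
  with assms have "(\<Prod>l\<in>I - {i}. x j - x l) = 0"
    by (subst prod_zero_iff) auto
  with False show ?thesis by (simp add: lagrange_basis_def poly_prod)
qed

lemma degree_lagrange_basis:
  assumes "finite I" "i \<in> I"
  shows "degree (lagrange_basis x I i) \<le> card I - 1"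
proof -
  have "degree (\<Prod>j\<in>I - {i}. [:- x j, 1:]) \<le> card (I - {i})"
    using degree_prod_sum_le[of "I - {i}" "\<lambda>j. [:- x j, 1:]"] assms by simp
  with assms show ?thesis
    unfolding lagrange_basis_def by (simp add: order.trans[OF degree_smult_le])
qed

lemma sum_coeff_lagrange_basis_power:
  assumes "inj_on x {..<k}" "i < k" "j < k"
  shows "(\<Sum>l<k. coeff (lagrange_basis x {..<k} i) l * x j ^ l) = (if i = j then 1 else 0)"
proof -
  have "degree (lagrange_basis x {..<k} i) < k"
    using degree_lagrange_basis[of "{..<k}" i x] assms by simp
  hence "(\<Sum>l<k. coeff (lagrange_basis x {..<k} i) l * x j ^ l) = poly (lagrange_basis x {..<k} i) (x j)"
    by (simp add: poly_eq_sum_lessThan)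
  with assms show ?thesis by (simp add: poly_lagrange_basis)
qed

lemma poly_pderiv_prod_linear_at_root:
  fixes r :: "'i \<Rightarrow> 'a::idom"
  assumes "finite A" "t \<in> A"
  shows "poly (pderiv (\<Prod>a\<in>A. [:- r a, 1:])) (r t) = (\<Prod>a\<in>A - {t}. r t - r a)"
proof -
  have "poly (pderiv (\<Prod>a\<in>A. [:- r a, 1:])) (r t) = (\<Sum>a\<in>A. \<Prod>a'\<in>A - {a}. r t - r a')"
    by (simp add: pderiv_prod poly_sum poly_prod pderiv_pCons)
  also have "\<dots> = (\<Prod>a\<in>A - {t}. r t - r a)"
  proof -
    have "(\<Sum>a\<in>A - {t}. \<Prod>a'\<in>A - {a}. r t - r a') = 0"
      using assms by (intro sum.neutral ballI prod_zero) auto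
    thus ?thesis
      using assms by (simp add: sum.remove)
  qed
  finally show ?thesis .
qed

section \<open>Roots of unity and discrete Fourier inversion\<close>

definition unity_root :: "nat \<Rightarrow> complex" where
  "unity_root q = cis (2 * pi / real q)"

lemma norm_unity_root [simp]: "cmod (unity_root q) = 1"
  by (simp add: unity_root_def)

lemma unity_root_nonzero [simp]: "unity_root q \<noteq> 0"
  by (simp add: unity_root_def)

lemma norm_unity_root_power [simp]: "cmod (unity_root q ^ t) = 1"
  by (simp add: unity_root_def norm_power)

lemma unity_root_power_eq_cis: "unity_root q ^ t = cis (2 * pi * real t / real q)"
  by (simp add: unity_root_def DeMoivre mult_ac)

lemma unity_root_power_self: "0 < q \<Longrightarrow> unity_root q ^ q = 1"
  by (simp add: unity_root_power_eq_cis)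

lemma inj_on_unity_root_power: "0 < q \<Longrightarrow> inj_on (\<lambda>t. unity_root q ^ t) {..<q}"
  using bij_betw_roots_unity[of q] by (simp add: bij_betw_def unity_root_power_eq_cis)

lemma norm_diff_unity_root_powers_ge:
  assumes "s < q" "t < q" "s \<noteq> t"
  shows "2 / real q \<le> cmod (unity_root q ^ s - unity_root q ^ t)"
proof -
  have less: "2 / real q \<le> cmod (unity_root q ^ s - unity_root q ^ t)" if "s < t" "t < q" for s t
  proof -
    have "unity_root q ^ s - unity_root q ^ t = unity_root q ^ s * (1 - unity_root q ^ (t - s))"
      using that by (simp add: algebra_simps power_add[symmetric])
    hence "cmod (unity_root q ^ s - unity_root q ^ t) = 2 * \<bar>sin (pi * real (t - s) / real q)\<bar>"
      by (simp add: norm_mult unity_root_power_eq_cis norm_1_minus_cis)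
    also have "\<dots> \<ge> 2 * (1 / real q)"
    proof -
      have "1 / real q \<le> sin (pi * real (t - s) / real q)"
        using that by (intro sin_pi_frac_ge) auto
      thus ?thesis using abs_ge_self[of "sin (pi * real (t - s) / real q)"] by linarith
    qed
    finally show ?thesis by simp
  qed
  show ?thesis
  proof (cases "s < t")
    case False
    with assms have "t < s" by simp
    with less[of t s] assms show ?thesis by (simp add: norm_minus_commute)
  qed (use less assms in simp)
qed

lemma sum_unity_root_powers:
  assumes "j < q" "a < q"
  shows "(\<Sum>t<q. (unity_root q ^ j * cnj (unity_root q) ^ a) ^ t) = (if j = a then of_nat q else 0)"
proof -
  define y where "y = unity_root q ^ j * cnj (unity_root q) ^ a"
  have "cnj (unity_root q) ^ a * unity_root q ^ a = 1"
    by (simp add: unity_root_def cis_cnj DeMoivre cis_mult)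
  hence y: "y * unity_root q ^ a = unity_root q ^ j"
    unfolding y_def by (simp add: mult.assoc)
  show ?thesis
  proof (cases "j = a")
    case True
    with y have "y = 1" by simp
    with True show ?thesis by (simp add: y_def)
  next
    case False
    have "y ^ q = (unity_root q ^ q) ^ j * cnj (unity_root q ^ q) ^ a"
      unfolding y_def by (simp add: power_mult_distrib power_mult[symmetric] mult.commute)
    hence "y ^ q = 1" using assms by (simp add: unity_root_power_self)
    moreover have "y \<noteq> 1"
      using y False inj_on_unity_root_power[of q] assms by (auto dest: inj_onD)
    ultimately have "(\<Sum>t<q. y ^ t) = 0" by (simp add: geometric_sum)
    with False show ?thesis by (simp add: y_def)
  qed
qed

lemma poly_eq_0_if_zero_at_unity_roots:
  fixes p :: "complex poly"
  assumes "degree p < q" and "\<And>t. t < q \<Longrightarrow> poly p (unity_root q ^ t) = 0"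
  shows "p = 0"
proof (rule ccontr)
  assume "p \<noteq> 0"
  have "q = card ((\<lambda>t. unity_root q ^ t) ` {..<q})"
    using inj_on_unity_root_power[of q] assms(1) by (simp add: card_image)
  also have "\<dots> \<le> card {z. poly p z = 0}"
    using assms(2) by (intro card_mono poly_roots_finite[OF \<open>p \<noteq> 0\<close>]) auto
  also have "\<dots> \<le> degree p"
    by (rule card_poly_roots_bound[OF \<open>p \<noteq> 0\<close>])
  finally show False using assms(1) by simp
qed

lemma of_nat_mult_coeff_eq_dft:
  fixes p :: "complex poly"
  assumes "degree p < q" "a < q"
  shows "of_nat q * coeff p a = (\<Sum>t<q. poly p (unity_root q ^ t) * cnj (unity_root q) ^ (t * a))"
proof -
  have "(\<Sum>t<q. poly p (unity_root q ^ t) * cnj (unity_root q) ^ (t * a))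
      = (\<Sum>t<q. \<Sum>j<q. coeff p j * (unity_root q ^ j * cnj (unity_root q) ^ a) ^ t)"
    using assms(1)
    by (simp add: poly_eq_sum_lessThan sum_distrib_left power_mult_distrib power_mult[symmetric] mult_ac)
  also have "\<dots> = (\<Sum>j<q. coeff p j * (\<Sum>t<q. (unity_root q ^ j * cnj (unity_root q) ^ a) ^ t))"
    by (subst sum.swap) (simp add: sum_distrib_left)
  also have "\<dots> = of_nat q * coeff p a"
    using assms(2) by (simp add: sum_unity_root_powers if_distrib cong: if_cong)
  finally show ?thesis ..
qed

lemma norm_coeff_le_unity_root_bound:
  fixes p :: "complex poly"
  assumes "degree p < q" and bound: "\<And>t. t < q \<Longrightarrow> cmod (poly p (unity_root q ^ t)) \<le> B"
  shows "cmod (coeff p a) \<le> B"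
proof (cases "a < q")
  case True
  have "real q * cmod (coeff p a) = cmod (\<Sum>t<q. poly p (unity_root q ^ t) * cnj (unity_root q) ^ (t * a))"
    by (simp flip: of_nat_mult_coeff_eq_dft[OF assms(1) True] add: norm_mult)
  also have "\<dots> \<le> (\<Sum>t<q. cmod (poly p (unity_root q ^ t)))"
    by (rule order.trans[OF norm_sum]) (simp add: norm_mult norm_power)
  also have "\<dots> \<le> real q * B"
    using sum_mono[of "{..<q}", OF bound] by simp
  finally show ?thesis using True by simp
next
  case False
  hence "coeff p a = 0" using assms(1) by (simp add: coeff_eq_0)
  moreover have "0 \<le> B" using bound[of 0] assms(1) by (auto intro: order.trans[OF norm_ge_zero])
  ultimately show ?thesis by simp
qed

definition unity_kernel :: "nat \<Rightarrow> complex \<Rightarrow> complex poly" where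
  "unity_kernel q c = (\<Sum>j<q. monom (cnj c ^ j) j)"

lemma poly_unity_kernel:
  assumes "s < q" "t < q"
  shows "poly (unity_kernel q (unity_root q ^ s)) (unity_root q ^ t) = (if t = s then of_nat q else 0)"
  using sum_unity_root_powers[OF assms(2,1)]
  by (simp add: unity_kernel_def poly_sum poly_monom power_mult_distrib mult_ac flip: power_mult)

lemma degree_unity_kernel: "degree (unity_kernel q c) \<le> q - 1"
  unfolding unity_kernel_def by (rule degree_sum_le) (auto intro: order.trans[OF degree_monom_le])

lemma norm_poly_pderiv_unity_kernel_le:
  assumes "cmod c \<le> 1" "cmod u \<le> 1"
  shows "cmod (poly (pderiv (unity_kernel q c)) u) \<le> real q ^ 2"
proof -
  have "poly (pderiv (unity_kernel q c)) u = (\<Sum>j<q. of_nat j * cnj c ^ j * u ^ (j - 1))"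
    by (simp add: unity_kernel_def pderiv_sum poly_sum pderiv_monom poly_monom)
  also have "cmod \<dots> \<le> (\<Sum>j<q. real q)"
  proof (rule order.trans[OF norm_sum sum_mono])
    fix j assume "j \<in> {..<q}"
    moreover have "cmod c ^ j \<le> 1" "cmod u ^ (j - 1) \<le> 1"
      using assms by (simp_all add: power_le_one)
    ultimately show "cmod (of_nat j * cnj c ^ j * u ^ (j - 1)) \<le> real q"
      by (simp add: norm_mult norm_power mult_le_one order.trans[OF mult_right_le_one_le])
  qed
  finally show ?thesis by (simp add: power2_eq_square)
qed

section \<open>The Lagrange basis on a set of roots of unity\<close>

locale unity_root_nodes =
  fixes q k :: nat and idx :: "nat \<Rightarrow> nat"
  assumes k_pos: "0 < k" and k_le_q: "k \<le> q"
    and inj_idx: "inj_on idx {..<k}" and idx_less: "\<And>b. b < k \<Longrightarrow> idx b < q"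
begin

definition node :: "nat \<Rightarrow> complex" where
  "node b = unity_root q ^ idx b"

abbreviation lagrange :: "nat \<Rightarrow> complex poly" where
  "lagrange \<equiv> lagrange_basis node {..<k}"

definition spare :: "nat set" where
  "spare = {..<q} - idx ` {..<k}"

definition spare_poly :: "complex poly" where
  "spare_poly = (\<Prod>t\<in>spare. [:- (unity_root q ^ t), 1:])"

lemma q_pos: "0 < q"
  using k_pos k_le_q by simp

lemma inj_on_node: "inj_on node {..<k}"
proof -
  have "inj_on (\<lambda>t. unity_root q ^ t) (idx ` {..<k})"
    by (rule inj_on_subset[OF inj_on_unity_root_power[OF q_pos]]) (auto simp: idx_less)
  thus ?thesis
    unfolding node_def using inj_idx by (auto simp: inj_on_def)
qed

lemma poly_lagrange_node:
  "b < k \<Longrightarrow> b' < k \<Longrightarrow> poly (lagrange b) (node b') = (if b' = b then 1 else 0)"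
  using poly_lagrange_basis[OF _ inj_on_node] by simp

lemma degree_lagrange: "b < k \<Longrightarrow> degree (lagrange b) \<le> k - 1"
  using degree_lagrange_basis[of "{..<k}" b node] by simp

lemma card_spare: "card spare = q - k"
proof -
  have "card (idx ` {..<k}) = k"
    using inj_idx by (simp add: card_image)
  moreover have "idx ` {..<k} \<subseteq> {..<q}"
    using idx_less by auto
  ultimately show ?thesis
    unfolding spare_def by (simp add: card_Diff_subset)
qed

lemma finite_spare [simp]: "finite spare"
  by (simp add: spare_def)

lemma poly_spare_poly: "poly spare_poly z = (\<Prod>t\<in>spare. z - unity_root q ^ t)"
  by (simp add: spare_poly_def poly_prod)

lemma degree_spare_poly: "degree spare_poly \<le> q - k"
  using degree_prod_sum_le[of spare "\<lambda>t. [:- (unity_root q ^ t), 1:]"]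
  by (simp add: spare_poly_def card_spare)

lemma lagrange_mult_spare_poly:
  assumes b: "b < k"
  shows "smult (of_nat q) (lagrange b * spare_poly)
    = smult (poly spare_poly (node b)) (unity_kernel q (node b))"
proof -
  have idx_b: "idx b < q" using idx_less b .
  have "degree (lagrange b * spare_poly) \<le> (k - 1) + (q - k)"
    using degree_mult_le[of "lagrange b" spare_poly] degree_lagrange[OF b] degree_spare_poly
    by linarith
  hence "degree (smult (of_nat q) (lagrange b * spare_poly)) < q"
    using k_pos k_le_q by (intro le_less_trans[OF degree_smult_le]) linarith
  moreover have "degree (smult (poly spare_poly (node b)) (unity_kernel q (node b))) < q"
    using q_pos degree_unity_kernel[of q "node b"] by (intro le_less_trans[OF degree_smult_le]) linarith
  ultimately have deg: "degree (smult (of_nat q) (lagrange b * spare_poly)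
      - smult (poly spare_poly (node b)) (unity_kernel q (node b))) < q"
    by (rule degree_diff_less)
  have vals: "poly (smult (of_nat q) (lagrange b * spare_poly)) (unity_root q ^ t)
      = poly (smult (poly spare_poly (node b)) (unity_kernel q (node b))) (unity_root q ^ t)"
    if t: "t < q" for t
  proof (cases "t = idx b")
    case True
    thus ?thesis
      using b poly_lagrange_node[OF b b] poly_unity_kernel[OF idx_b idx_b]
      by (simp add: node_def)
  next
    case False
    have "poly (lagrange b * spare_poly) (unity_root q ^ t) = 0"
    proof (cases "t \<in> spare")
      case True
      thus ?thesis by (auto simp: poly_spare_poly prod_zero_iff)
    next
      case False
      with t obtain b' where "b' < k" "t = idx b'"
        by (auto simp: spare_def)
      with b \<open>t \<noteq> idx b\<close> show ?thesis
        using poly_lagrange_node[OF b] by (auto simp: node_def)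
    qed
    with False t idx_b show ?thesis
      by (simp add: node_def poly_unity_kernel)
  qed
  have "smult (of_nat q) (lagrange b * spare_poly)
      - smult (poly spare_poly (node b)) (unity_kernel q (node b)) = 0"
    by (rule poly_eq_0_if_zero_at_unity_roots[OF deg]) (simp only: poly_diff vals diff_self)
  thus ?thesis by simp
qed

lemma lagrange_at_spare_root_eq:
  assumes b: "b < k" and t: "t \<in> spare"
  shows "of_nat q * poly (lagrange b) (unity_root q ^ t) * poly (pderiv spare_poly) (unity_root q ^ t)
    = poly spare_poly (node b) * poly (pderiv (unity_kernel q (node b))) (unity_root q ^ t)"
proof -
  have "poly spare_poly (unity_root q ^ t) = 0"
    using t by (auto simp: poly_spare_poly prod_zero_iff)
  moreover have "poly (pderiv (smult (of_nat q) (lagrange b * spare_poly))) (unity_root q ^ t)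
    = poly (pderiv (smult (poly spare_poly (node b)) (unity_kernel q (node b)))) (unity_root q ^ t)"
    by (simp only: lagrange_mult_spare_poly[OF b])
  ultimately show ?thesis
    by (simp add: pderiv_smult pderiv_mult mult.assoc)
qed

lemma norm_pderiv_spare_poly_ge:
  assumes t: "t \<in> spare"
  shows "(2 / real q) ^ (q - k - 1) \<le> cmod (poly (pderiv spare_poly) (unity_root q ^ t))"
proof -
  have "(2 / real q) ^ (q - k - 1) = (\<Prod>a\<in>spare - {t}. 2 / real q)"
    using t by (simp add: card_spare)
  also have "\<dots> \<le> (\<Prod>a\<in>spare - {t}. cmod (unity_root q ^ t - unity_root q ^ a))"
    using t by (intro prod_mono) (auto simp: spare_def intro: norm_diff_unity_root_powers_ge)
  also have "\<dots> = cmod (poly (pderiv spare_poly) (unity_root q ^ t))"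
    using poly_pderiv_prod_linear_at_root[OF finite_spare t, of "\<lambda>a. unity_root q ^ a"]
    by (simp add: spare_poly_def prod_norm)
  finally show ?thesis .
qed

lemma norm_spare_poly_le:
  assumes "cmod z \<le> 1"
  shows "cmod (poly spare_poly z) \<le> 2 ^ (q - k)"
proof -
  have "cmod (poly spare_poly z) = (\<Prod>t\<in>spare. cmod (z - unity_root q ^ t))"
    by (simp add: poly_spare_poly prod_norm)
  also have "\<dots> \<le> (\<Prod>t\<in>spare. 2)"
    using assms by (intro prod_mono) (auto intro: order.trans[OF norm_triangle_ineq4])
  also have "\<dots> = 2 ^ (q - k)"
    by (simp add: card_spare)
  finally show ?thesis .
qed

lemma norm_lagrange_at_spare_root_le:
  assumes b: "b < k" and t: "t \<in> spare"
  shows "cmod (poly (lagrange b) (unity_root q ^ t)) \<le> 2 * real q ^ (q - k)"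
proof -
  obtain m where m: "q - k = Suc m"
    using t card_spare by (metis card_0_eq empty_iff finite_spare not0_implies_Suc)
  define L where "L = cmod (poly (lagrange b) (unity_root q ^ t))"
  have "real q * L * (2 / real q) ^ m
      \<le> real q * L * cmod (poly (pderiv spare_poly) (unity_root q ^ t))"
    using norm_pderiv_spare_poly_ge[OF t] m unfolding L_def
    by (intro mult_left_mono) auto
  also have "\<dots> = cmod (poly spare_poly (node b)) * cmod (poly (pderiv (unity_kernel q (node b))) (unity_root q ^ t))"
    using arg_cong[OF lagrange_at_spare_root_eq[OF b t], of cmod]
    unfolding L_def by (simp add: norm_mult)
  also have "\<dots> \<le> 2 ^ Suc m * real q ^ 2"
    using norm_spare_poly_le[of "node b"] norm_poly_pderiv_unity_kernel_le[of "node b" "unity_root q ^ t" q] m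
    by (intro mult_mono) (auto simp: node_def)
  finally have bound: "real q * L * (2 / real q) ^ m \<le> 2 ^ Suc m * real q ^ 2" .
  have "(2 / real q) ^ m * real q ^ m = 2 ^ m"
    using q_pos by (simp add: power_divide)
  hence "real q * (L * 2 ^ m) = real q * L * (2 / real q) ^ m * real q ^ m"
    by (simp add: algebra_simps)
  also have "\<dots> \<le> 2 ^ Suc m * real q ^ 2 * real q ^ m"
    using bound by (rule mult_right_mono) simp
  also have "\<dots> = real q * ((2 * real q ^ Suc m) * 2 ^ m)"
    by (simp add: power2_eq_square algebra_simps)
  finally have "L * 2 ^ m \<le> (2 * real q ^ Suc m) * 2 ^ m"
    using q_pos by simp
  thus ?thesis
    unfolding L_def m by simp
qed

lemma norm_lagrange_at_unity_root_le:
  assumes b: "b < k" and t: "t < q"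
  shows "cmod (poly (lagrange b) (unity_root q ^ t)) \<le> 2 * real q ^ (q - k)"
proof (cases "t \<in> spare")
  case False
  with t obtain b' where "b' < k" "t = idx b'"
    by (auto simp: spare_def)
  moreover have "1 \<le> real q ^ (q - k)"
    using q_pos by simp
  ultimately show ?thesis
    using poly_lagrange_node[OF b] by (simp add: node_def)
qed (use norm_lagrange_at_spare_root_le b in auto)

lemma norm_coeff_lagrange_le:
  assumes b: "b < k"
  shows "cmod (coeff (lagrange b) a) \<le> 2 * real q ^ (q - k)"
proof (rule norm_coeff_le_unity_root_bound)
  show "degree (lagrange b) < q"
    using degree_lagrange[OF b] k_pos k_le_q by linarith
qed (rule norm_lagrange_at_unity_root_le[OF b])

end

section \<open>Real form of complex matrices\<close>

definition re_im_block :: "complex \<Rightarrow> nat \<Rightarrow> nat \<Rightarrow> real" where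
  "re_im_block w i j = (if i = j then Re w else if i = 0 then - Im w else Im w)"

definition realify :: "nat \<Rightarrow> (nat \<Rightarrow> nat \<Rightarrow> complex) \<Rightarrow> real mat" where
  "realify k F = mat (2 * k) (2 * k) (\<lambda>(r, c). re_im_block (F (r div 2) (c div 2)) (r mod 2) (c mod 2))"

lemma re_im_block_mult:
  assumes "i < 2" "j < 2"
  shows "re_im_block a i 0 * re_im_block b 0 j + re_im_block a i 1 * re_im_block b 1 j
    = re_im_block (a * b) i j"
  using assms by (auto simp: re_im_block_def less_2_cases_iff algebra_simps)

lemma re_im_block_sum: "re_im_block (sum f A) i j = (\<Sum>a\<in>A. re_im_block (f a) i j)"
  by (simp add: re_im_block_def Re_sum Im_sum sum_negf)

lemma abs_re_im_block_le: "\<bar>re_im_block w i j\<bar> \<le> cmod w"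
  by (simp add: re_im_block_def abs_Re_le_cmod abs_Im_le_cmod)

lemma realify_carrier [simp]: "realify k F \<in> carrier_mat (2 * k) (2 * k)"
  by (simp add: realify_def)

lemma dim_realify [simp]: "dim_row (realify k F) = 2 * k" "dim_col (realify k F) = 2 * k"
  by (simp_all add: realify_def)

lemma index_realify:
  "r < 2 * k \<Longrightarrow> c < 2 * k \<Longrightarrow>
    realify k F $$ (r, c) = re_im_block (F (r div 2) (c div 2)) (r mod 2) (c mod 2)"
  by (simp add: realify_def)

lemma realify_cong:
  assumes "\<And>i j. i < k \<Longrightarrow> j < k \<Longrightarrow> F i j = G i j"
  shows "realify k F = realify k G"
  using assms by (intro eq_matI) (auto simp: index_realify)

lemma sum_lessThan_double:
  fixes f :: "nat \<Rightarrow> 'a::comm_monoid_add"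
  shows "(\<Sum>s<2 * k. f s) = (\<Sum>l<k. f (2 * l) + f (2 * l + 1))"
  by (induction k) (simp_all add: add.assoc)

lemma realify_mult: "realify k F * realify k G = realify k (\<lambda>i j. \<Sum>l<k. F i l * G l j)"
proof (rule eq_matI)
  fix r c assume "r < dim_row (realify k (\<lambda>i j. \<Sum>l<k. F i l * G l j))"
    and "c < dim_col (realify k (\<lambda>i j. \<Sum>l<k. F i l * G l j))"
  hence r: "r < 2 * k" and c: "c < 2 * k" by simp_all
  have "(realify k F * realify k G) $$ (r, c) = (\<Sum>s<2 * k. realify k F $$ (r, s) * realify k G $$ (s, c))"
    using r c by (simp add: scalar_prod_def atLeast0LessThan)
  also have "\<dots> = (\<Sum>l<k. re_im_block (F (r div 2) l * G l (c div 2)) (r mod 2) (c mod 2))"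
    unfolding sum_lessThan_double
    using r c re_im_block_mult[of "r mod 2" "c mod 2"]
    by (intro sum.cong) (auto simp: index_realify)
  also have "\<dots> = realify k (\<lambda>i j. \<Sum>l<k. F i l * G l j) $$ (r, c)"
    using r c by (simp add: index_realify re_im_block_sum)
  finally show "(realify k F * realify k G) $$ (r, c) = realify k (\<lambda>i j. \<Sum>l<k. F i l * G l j) $$ (r, c)" .
qed simp_all

lemma realify_one: "realify k (\<lambda>i j. if i = j then 1 else 0) = 1\<^sub>m (2 * k)"
proof (rule eq_matI)
  fix r c assume "r < dim_row (1\<^sub>m (2 * k) :: real mat)" "c < dim_col (1\<^sub>m (2 * k) :: real mat)"
  hence rc: "r < 2 * k" "c < 2 * k" by simp_all
  have "r = c \<longleftrightarrow> r div 2 = c div 2 \<and> r mod 2 = c mod 2"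
    by (metis div_mult_mod_eq)
  with rc show "realify k (\<lambda>i j. if i = j then 1 else 0) $$ (r, c) = 1\<^sub>m (2 * k) $$ (r, c)"
    by (cases "r div 2 = c div 2") (simp_all add: index_realify re_im_block_def)
qed simp_all

lemma abs_index_realify_le:
  assumes "\<And>i j. i < k \<Longrightarrow> j < k \<Longrightarrow> cmod (F i j) \<le> c" "r < 2 * k" "s < 2 * k"
  shows "\<bar>realify k F $$ (r, s)\<bar> \<le> c"
proof -
  have "cmod (F (r div 2) (s div 2)) \<le> c"
    using assms by auto
  thus ?thesis
    using assms(2,3) order.trans[OF abs_re_im_block_le] by (simp add: index_realify)
qed

lemma rot_mat_eq_realify: "rot_mat \<theta> = realify 1 (\<lambda>_ _. cis \<theta>)"
  by (intro eq_matI) (auto simp: rot_mat_def index_realify re_im_block_def less_2_cases_iff)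

lemma rot_mat_power: "rot_mat \<theta> ^\<^sub>m m = realify 1 (\<lambda>_ _. cis \<theta> ^ m)"
proof (induction m)
  case 0
  have "rot_mat \<theta> ^\<^sub>m 0 = realify 1 (\<lambda>i j. if i = j then 1 else 0)"
    by (simp add: realify_one rot_mat_def)
  also have "\<dots> = realify 1 (\<lambda>_ _. cis \<theta> ^ 0)"
    by (rule realify_cong) simp
  finally show ?case .
next
  case (Suc m)
  have "rot_mat \<theta> ^\<^sub>m Suc m = rot_mat \<theta> ^\<^sub>m m * rot_mat \<theta>"
    by simp
  also have "\<dots> = realify 1 (\<lambda>_ _. cis \<theta> ^ m) * realify 1 (\<lambda>_ _. cis \<theta>)"
    by (simp only: Suc) (simp only: rot_mat_eq_realify)
  also have "\<dots> = realify 1 (\<lambda>_ _. cis \<theta> ^ Suc m)"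
    by (simp add: realify_mult mult.commute)
  finally show ?case .
qed

lemma G_rec_eq_realify:
  assumes "\<And>b. b < k \<Longrightarrow> idx b < n"
  shows "G_rec \<theta> k n idx = realify k (\<lambda>i j. cis \<theta> ^ (idx j * i))"
proof (rule eq_matI)
  fix r c assume "r < dim_row (realify k (\<lambda>i j. cis \<theta> ^ (idx j * i)))"
    "c < dim_col (realify k (\<lambda>i j. cis \<theta> ^ (idx j * i)))"
  hence r: "r < 2 * k" and c: "c < 2 * k" by simp_all
  hence "2 * idx (c div 2) + c mod 2 < 2 * n"
    using assms[of "c div 2"] by linarith
  with r c show "G_rec \<theta> k n idx $$ (r, c) = realify k (\<lambda>i j. cis \<theta> ^ (idx j * i)) $$ (r, c)"
    by (simp add: G_rec_def G_rot_def rot_mat_power index_realify)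
qed (simp_all add: G_rec_def)

section \<open>Spectral norm and inverse\<close>

lemma vec_norm2_eq_L2_set: "vec_norm2 x = L2_set (\<lambda>i. x $ i) {..<dim_vec x}"
  by (simp add: vec_norm2_def L2_set_def)

lemma L2_set_abs: "L2_set (\<lambda>i. \<bar>f i\<bar>) A = L2_set f A"
  by (simp add: L2_set_def)

lemma spec_norm_bounds:
  fixes M :: "real mat"
  assumes M: "M \<in> carrier_mat nr nc" and "0 < nc" "0 \<le> c"
    and entries: "\<And>i j. i < nr \<Longrightarrow> j < nc \<Longrightarrow> \<bar>M $$ (i, j)\<bar> \<le> c"
  shows "0 \<le> spec_norm M" and "spec_norm M \<le> sqrt (real (nr * nc)) * c"
proof -
  define S where "S = {vec_norm2 (M *\<^sub>v x) | x. x \<in> carrier_vec (dim_col M) \<and> vec_norm2 x = 1}"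
  have image_le: "vec_norm2 (M *\<^sub>v x) \<le> sqrt (real (nr * nc)) * c"
    if x: "x \<in> carrier_vec nc" "vec_norm2 x = 1" for x
  proof -
    have row_le: "\<bar>(M *\<^sub>v x) $ i\<bar> \<le> sqrt (real nc) * c" if i: "i < nr" for i
    proof -
      have "\<bar>(M *\<^sub>v x) $ i\<bar> = \<bar>\<Sum>j<nc. M $$ (i, j) * x $ j\<bar>"
        using M x i by (simp add: scalar_prod_def atLeast0LessThan)
      also have "\<dots> \<le> (\<Sum>j<nc. \<bar>M $$ (i, j)\<bar> * \<bar>x $ j\<bar>)"
        by (rule order.trans[OF sum_abs]) (simp add: abs_mult)
      also have "\<dots> \<le> L2_set (\<lambda>j. M $$ (i, j)) {..<nc} * L2_set (\<lambda>j. x $ j) {..<nc}"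
        by (rule L2_set_mult_ineq)
      also have "L2_set (\<lambda>j. x $ j) {..<nc} = 1"
        using x by (simp add: vec_norm2_eq_L2_set)
      also have "L2_set (\<lambda>j. M $$ (i, j)) {..<nc} \<le> L2_set (\<lambda>j. c) {..<nc}"
        unfolding L2_set_abs[symmetric, of "\<lambda>j. M $$ (i, j)"]
        using i entries by (intro L2_set_mono) auto
      finally show ?thesis
        using \<open>0 \<le> c\<close> by (simp add: L2_set_constant)
    qed
    have "vec_norm2 (M *\<^sub>v x) = L2_set (\<lambda>i. \<bar>(M *\<^sub>v x) $ i\<bar>) {..<nr}"
      using M by (simp add: vec_norm2_eq_L2_set L2_set_abs)
    also have "\<dots> \<le> L2_set (\<lambda>i. sqrt (real nc) * c) {..<nr}"
      using row_le by (intro L2_set_mono) auto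
    also have "\<dots> = sqrt (real (nr * nc)) * c"
      using \<open>0 \<le> c\<close> by (simp add: L2_set_constant real_sqrt_mult)
    finally show ?thesis .
  qed
  have "vec_norm2 (unit_vec nc 0) = 1"
  proof -
    have "(\<Sum>i<nc. ((unit_vec nc 0 :: real vec) $ i)\<^sup>2) = (\<Sum>i<nc. if i = 0 then 1 else 0)"
      by (rule sum.cong) auto
    thus ?thesis
      using \<open>0 < nc\<close> by (simp add: vec_norm2_def)
  qed
  hence in_S: "vec_norm2 (M *\<^sub>v unit_vec nc 0) \<in> S"
    using M unfolding S_def by auto
  have S_le: "y \<le> sqrt (real (nr * nc)) * c" if "y \<in> S" for y
  proof -
    from that M obtain x where "x \<in> carrier_vec nc" "vec_norm2 x = 1" "y = vec_norm2 (M *\<^sub>v x)"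
      unfolding S_def by auto
    with image_le show ?thesis by simp
  qed
  hence bdd: "bdd_above S"
    by (rule bdd_aboveI)
  show "0 \<le> spec_norm M"
    unfolding spec_norm_def S_def[symmetric]
    by (rule cSup_upper2[OF in_S _ bdd]) (simp add: vec_norm2_eq_L2_set)
  show "spec_norm M \<le> sqrt (real (nr * nc)) * c"
    unfolding spec_norm_def S_def[symmetric] using in_S S_le by (intro cSup_least) blast+
qed

lemma inv_mat_eq_left_inverse:
  fixes A B :: "real mat"
  assumes A: "A \<in> carrier_mat n n" and B: "B \<in> carrier_mat n n" and BA: "B * A = 1\<^sub>m n"
  shows "invertible_mat A" and "inv_mat A = B"
proof -
  have AB: "A * B = 1\<^sub>m n"
    by (rule mat_mult_left_right_inverse[OF B A BA])
  have inverts: "B \<in> carrier_mat (dim_row A) (dim_row A) \<and> inverts_mat A B \<and> inverts_mat B A"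
    using A B AB BA by (simp add: inverts_mat_def)
  thus "invertible_mat A"
    using A by (auto simp: invertible_mat_def)
  define B' where "B' = inv_mat A"
  have "B' \<in> carrier_mat (dim_row A) (dim_row A) \<and> inverts_mat A B' \<and> inverts_mat B' A"
    unfolding B'_def inv_mat_def by (rule someI[of _ B]) (rule inverts)
  hence B': "B' \<in> carrier_mat n n" "B' * A = 1\<^sub>m n"
    using A by (auto simp: inverts_mat_def)
  have "B' = B' * (A * B)"
    using B' AB by simp
  also have "\<dots> = (B' * A) * B"
    by (rule assoc_mult_mat[OF B'(1) A B, symmetric])
  also have "\<dots> = B"
    using B B' by simp
  finally show "inv_mat A = B"
    unfolding B'_def .
qed

section \<open>The recovery matrix\<close>

context unity_root_nodes
begin

definition vandermonde :: "nat \<Rightarrow> nat \<Rightarrow> complex" where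
  "vandermonde i j = node j ^ i"

lemma G_rec_eq_realify_vandermonde:
  assumes "\<And>b. b < k \<Longrightarrow> idx b < n"
  shows "G_rec (2 * pi / real q) k n idx = realify k vandermonde"
proof -
  have "G_rec (2 * pi / real q) k n idx = realify k (\<lambda>i j. cis (2 * pi / real q) ^ (idx j * i))"
    using assms by (rule G_rec_eq_realify)
  also have "\<dots> = realify k vandermonde"
    by (rule realify_cong) (simp add: vandermonde_def node_def unity_root_def power_mult)
  finally show ?thesis .
qed

lemma realify_lagrange_mult_vandermonde:
  "realify k (\<lambda>i j. coeff (lagrange i) j) * realify k vandermonde = 1\<^sub>m (2 * k)"
proof -
  have "realify k (\<lambda>i j. coeff (lagrange i) j) * realify k vandermonde
      = realify k (\<lambda>i j. if i = j then 1 else 0)"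
    unfolding realify_mult vandermonde_def
    by (intro realify_cong sum_coeff_lagrange_basis_power inj_on_node)
  thus ?thesis by (simp add: realify_one)
qed

lemma invertible_realify_vandermonde: "invertible_mat (realify k vandermonde)"
  and inv_mat_realify_vandermonde:
    "inv_mat (realify k vandermonde) = realify k (\<lambda>i j. coeff (lagrange i) j)"
  by (rule inv_mat_eq_left_inverse[OF realify_carrier realify_carrier
        realify_lagrange_mult_vandermonde])+

lemma cond_num_realify_vandermonde_le:
  "cond_num (realify k vandermonde) \<le> 8 * real k ^ 2 * real q ^ (q - k)"
proof -
  have k2: "sqrt (real (2 * k * (2 * k))) = 2 * real k"
    by (simp add: real_sqrt_mult)
  have V_entries: "\<bar>realify k vandermonde $$ (i, j)\<bar> \<le> 1" if "i < 2 * k" "j < 2 * k" for i j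
    using that by (intro abs_index_realify_le) (simp_all add: vandermonde_def node_def norm_power)
  have V: "0 \<le> spec_norm (realify k vandermonde)" "spec_norm (realify k vandermonde) \<le> 2 * real k"
    using spec_norm_bounds[OF realify_carrier _ _ V_entries] k_pos k2 by auto
  have W_entries: "\<bar>realify k (\<lambda>i j. coeff (lagrange i) j) $$ (i, j)\<bar> \<le> 2 * real q ^ (q - k)"
    if "i < 2 * k" "j < 2 * k" for i j
    using that by (intro abs_index_realify_le norm_coeff_lagrange_le)
  have W: "0 \<le> spec_norm (realify k (\<lambda>i j. coeff (lagrange i) j))"
    "spec_norm (realify k (\<lambda>i j. coeff (lagrange i) j)) \<le> 2 * real k * (2 * real q ^ (q - k))"
    using spec_norm_bounds[OF realify_carrier _ _ W_entries] k_pos k2 by auto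
  have "cond_num (realify k vandermonde)
      \<le> (2 * real k) * (2 * real k * (2 * real q ^ (q - k)))"
    unfolding cond_num_def inv_mat_realify_vandermonde
    using V W by (intro mult_mono) auto
  also have "\<dots> = 8 * real k ^ 2 * real q ^ (q - k)"
    by (simp add: power2_eq_square)
  finally show ?thesis .
qed

end

theorem theorem2:
  "\<exists>C>0. \<forall>(n::nat) (q::nat) (kA::nat) (idx::nat \<Rightarrow> nat).
     odd q \<and> n \<le> q \<and> 1 \<le> kA \<and> kA \<le> n \<and>
     inj_on idx {..<kA} \<and> (\<forall>b<kA. idx b < n) \<longrightarrow>
       invertible_mat (G_rec (2 * pi / real q) kA n idx) \<and>
       cond_num (G_rec (2 * pi / real q) kA n idx)
         \<le> C * real q powr (real q - real kA + 5.5)"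
proof (intro exI[of _ 8] conjI allI impI)
  fix n q kA :: nat and idx :: "nat \<Rightarrow> nat"
  assume H: "odd q \<and> n \<le> q \<and> 1 \<le> kA \<and> kA \<le> n \<and> inj_on idx {..<kA} \<and> (\<forall>b<kA. idx b < n)"
  then interpret unity_root_nodes q kA idx
    by unfold_locales auto
  have G: "G_rec (2 * pi / real q) kA n idx = realify kA vandermonde"
    using H by (intro G_rec_eq_realify_vandermonde) auto
  show "invertible_mat (G_rec (2 * pi / real q) kA n idx)"
    unfolding G by (rule invertible_realify_vandermonde)
  have "real kA ^ 2 * real q ^ (q - kA) \<le> real q ^ 2 * real q ^ (q - kA)"
    using k_le_q by (intro mult_right_mono power_mono) auto
  also have "\<dots> = real q ^ (q - kA + 2)"
    by (subst power_add) (rule mult.commute)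
  also have "\<dots> = real q powr real (q - kA + 2)"
    using q_pos by (intro powr_realpow[symmetric]) simp
  also have "\<dots> = real q powr (real q - real kA + 2)"
    using k_le_q by (simp add: of_nat_diff add.commute)
  also have "\<dots> \<le> real q powr (real q - real kA + 5.5)"
    using q_pos by (intro powr_mono) auto
  finally show "cond_num (G_rec (2 * pi / real q) kA n idx) \<le> 8 * real q powr (real q - real kA + 5.5)"
    using cond_num_realify_vandermonde_le unfolding G by simp
qed simp

end
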